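(* Let $k$ be a positive integer and let $T$ be a tournament on $n$ vertices with $n \geq (2k-1)2^{2k}$. Then $\mathrm{sinv}'_k(T) \leq \mathrm{sinv}_k(T) \leq 1$.
   Context: A tournament is an orientation of a complete graph. For a digraph $D$ and $X \subseteq V(D)$, inverting $X$ means reversing the direction of every arc of $D$ with both endvertices in $X$. A digraph $D$ is $k$-arc-strong if for every partition $(V_1,V_2)$ of $V(D)$ into nonempty sets there are at least $k$ arcs from $V_1$ to $V_2$; it is $k$-strong if $|V(D)|\ge k+1$ and $D-S$ is strongly connected for every $S\subseteq V(D)$ with $|S|<k$. $\mathrm{sinv}'_k(D)$ (resp. $\mathrm{sinv}_k(D)$) is the minimum number of sets whose successive inversion transforms $D$ into a $k$-arc-strong (resp. $k$-strong) digraph. *)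

theory Defs
  imports Main "HOL-Library.Extended_Nat"
begin

definition tournament :: "'a set \<Rightarrow> ('a \<times> 'a) set \<Rightarrow> bool" where
  "tournament V A \<longleftrightarrow> finite V \<and> A \<subseteq> V \<times> V \<and> (\<forall>v. (v, v) \<notin> A) \<and>
     (\<forall>u\<in>V. \<forall>v\<in>V. u \<noteq> v \<longrightarrow> ((u, v) \<in> A \<longleftrightarrow> (v, u) \<notin> A))"

definition invert :: "'a set \<Rightarrow> ('a \<times> 'a) set \<Rightarrow> ('a \<times> 'a) set" where
  "invert X A = {(u, v). (u, v) \<in> A \<and> \<not> (u \<in> X \<and> v \<in> X)} \<union>
                {(v, u) | u v. (u, v) \<in> A \<and> u \<in> X \<and> v \<in> X}"

definition invert_seq :: "'a set list \<Rightarrow> ('a \<times> 'a) set \<Rightarrow> ('a \<times> 'a) set" where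
  "invert_seq Xs A = foldl (\<lambda>B X. invert X B) A Xs"

definition strongly_connected :: "'a set \<Rightarrow> ('a \<times> 'a) set \<Rightarrow> bool" where
  "strongly_connected V A \<longleftrightarrow> (\<forall>u\<in>V. \<forall>v\<in>V. (u, v) \<in> (A \<inter> (V \<times> V))\<^sup>*)"

definition k_arc_strong :: "nat \<Rightarrow> 'a set \<Rightarrow> ('a \<times> 'a) set \<Rightarrow> bool" where
  "k_arc_strong k V A \<longleftrightarrow>
     (\<forall>V1. V1 \<subseteq> V \<and> V1 \<noteq> {} \<and> V1 \<noteq> V \<longrightarrow>
        card {(u, v) \<in> A. u \<in> V1 \<and> v \<in> V - V1} \<ge> k)"

definition k_strong :: "nat \<Rightarrow> 'a set \<Rightarrow> ('a \<times> 'a) set \<Rightarrow> bool" where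
  "k_strong k V A \<longleftrightarrow> card V \<ge> k + 1 \<and>
     (\<forall>S. S \<subseteq> V \<and> card S < k \<longrightarrow>
        strongly_connected (V - S) (A \<inter> ((V - S) \<times> (V - S))))"

text \<open>Minimum number of sets whose successive inversion yields a k-arc-strong
  (resp. k-strong) digraph; \<infinity> if impossible.\<close>
definition sinv_arc :: "nat \<Rightarrow> 'a set \<Rightarrow> ('a \<times> 'a) set \<Rightarrow> enat" where
  "sinv_arc k V A = (INF Xs \<in> {Xs. (\<forall>X\<in>set Xs. X \<subseteq> V) \<and> k_arc_strong k V (invert_seq Xs A)}.
                       enat (length Xs))"

definition sinv :: "nat \<Rightarrow> 'a set \<Rightarrow> ('a \<times> 'a) set \<Rightarrow> enat" where
  "sinv k V A = (INF Xs \<in> {Xs. (\<forall>X\<in>set Xs. X \<subseteq> V) \<and> k_strong k V (invert_seq Xs A)}.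
                       enat (length Xs))"

end

theory Submission
  imports Defs
begin

(* Every tournament on U has a vertex dominating at least (|U| - 1)/2 others, so restricting k
   times to the out-neighbourhood of such a vertex gives a k-set P dominating a set U with
   n + 1 <= 2^k (|U| + 1).  The same inside U for the converse relation gives a k-set N
   dominated by a set R with |U| + 1 <= 2^k (|R| + 1), hence |R| >= 2k - 1 because
   n >= (2k - 1) 4^k.  Inverting P u N turns P -> N into N -> P, so that P -> R -> N -> P is a
   cycle of blocks of size at least k, strongly connected after deleting fewer than k vertices.
   Each further vertex with fewer than k out- or in-neighbours in W = P u N u R is inverted as
   well; this exchanges its out- and in-neighbours in P u N and keeps those in R, and since
   |P u N| = 2k and |R| >= 2k - 1 it then has at least k of each in W.  So after deleting fewer
   than k vertices every vertex still has an arc into and an arc from the rest of W. *)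

definition tournament_on :: "'a set \<Rightarrow> ('a \<times> 'a) set \<Rightarrow> bool" where
  "tournament_on U E \<longleftrightarrow> (\<forall>u\<in>U. (u, u) \<notin> E) \<and>
     (\<forall>u\<in>U. \<forall>v\<in>U. u \<noteq> v \<longrightarrow> ((u, v) \<in> E \<longleftrightarrow> (v, u) \<notin> E))"

lemma tournament_imp_tournament_on: "tournament V A \<Longrightarrow> tournament_on V A"
  unfolding tournament_def tournament_on_def by blast

lemma tournament_on_subset: "tournament_on V E \<Longrightarrow> U \<subseteq> V \<Longrightarrow> tournament_on U E"
  unfolding tournament_on_def by blast

lemma tournament_on_converse: "tournament_on V E \<Longrightarrow> tournament_on V (E\<inverse>)"
  unfolding tournament_on_def by blast

lemma exists_notin_of_card_less: "finite S \<Longrightarrow> card S < card Z \<Longrightarrow> \<exists>z\<in>Z. z \<notin> S"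
  by (meson card_mono not_le subsetI)

lemma card_filter_Un_disjoint:
  assumes "finite Y" "finite Z" "Y \<inter> Z = {}"
  shows "card {w \<in> Y \<union> Z. P w} = card {w \<in> Y. P w} + card {w \<in> Z. P w}"
proof -
  have "{w \<in> Y \<union> Z. P w} = {w \<in> Y. P w} \<union> {w \<in> Z. P w}" by auto
  also have "card \<dots> = card {w \<in> Y. P w} + card {w \<in> Z. P w}"
    by (rule card_Un_disjoint) (use assms in auto)
  finally show ?thesis .
qed

lemma tournament_on_card_out_plus_in:
  assumes "tournament_on V E" "Y \<subseteq> V" "finite Y" "x \<in> V"
  shows "card {w \<in> Y. (x, w) \<in> E} + card {w \<in> Y. (w, x) \<in> E} = card (Y - {x})"
proof -
  have exactly_one: "(x, w) \<in> E \<longleftrightarrow> (w, x) \<notin> E" if "w \<in> Y - {x}" for w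
    using assms(1,2,4) that unfolding tournament_on_def by blast
  have "(x, x) \<notin> E" using assms(1,4) unfolding tournament_on_def by blast
  then have "Y - {x} = {w \<in> Y. (x, w) \<in> E} \<union> {w \<in> Y. (w, x) \<in> E}"
    using exactly_one by blast
  also have "card \<dots> = card {w \<in> Y. (x, w) \<in> E} + card {w \<in> Y. (w, x) \<in> E}"
    by (rule card_Un_disjoint) (use assms(3) exactly_one \<open>(x, x) \<notin> E\<close> in auto)
  finally show ?thesis ..
qed

lemma sum_card_out_nbrs:
  assumes "finite U"
  shows "(\<Sum>v\<in>U. card {w \<in> U. (v, w) \<in> E}) = card (Restr E U)"
proof -
  have "Restr E U = (SIGMA v:U. {w \<in> U. (v, w) \<in> E})" by auto
  then show ?thesis using assms by simp
qed

lemma sum_card_out_nbrs_eq_sum_card_in_nbrs: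
  assumes "finite U"
  shows "(\<Sum>v\<in>U. card {w \<in> U. (v, w) \<in> E}) = (\<Sum>v\<in>U. card {w \<in> U. (w, v) \<in> E})"
proof -
  have "Restr (E\<inverse>) U = (Restr E U)\<inverse>" by auto
  then show ?thesis
    using sum_card_out_nbrs[OF assms, of E] sum_card_out_nbrs[OF assms, of "E\<inverse>"] by simp
qed

lemma tournament_on_exists_large_out_degree:
  assumes "tournament_on U E" "finite U" "U \<noteq> {}"
  shows "\<exists>v\<in>U. card U \<le> 2 * card {w \<in> U. (v, w) \<in> E} + 1"
proof (rule ccontr)
  define n where "n = card U"
  define out where "out v = card {w \<in> U. (v, w) \<in> E}" for v
  have "n > 0" using assms(2,3) n_def by (simp add: card_gt_0_iff)
  have "(\<Sum>v\<in>U. out v) + (\<Sum>v\<in>U. card {w \<in> U. (w, v) \<in> E}) = (\<Sum>v\<in>U. n - 1)"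
    unfolding sum.distrib[symmetric] out_def n_def
    using tournament_on_card_out_plus_in[OF assms(1) order_refl assms(2)] assms(2)
    by (intro sum.cong) simp_all
  then have sum_out: "2 * (\<Sum>v\<in>U. out v) = n * (n - 1)"
    using sum_card_out_nbrs_eq_sum_card_in_nbrs[OF assms(2), of E] unfolding out_def n_def by simp
  assume "\<not> ?thesis"
  then have "\<forall>v\<in>U. 2 * out v + 2 \<le> n" unfolding out_def n_def by auto
  have "2 * (\<Sum>v\<in>U. out v) + 2 * n = (\<Sum>v\<in>U. 2 * out v + 2)"
    unfolding sum.distrib sum_distrib_left[symmetric] by (simp add: n_def)
  also have "\<dots> \<le> n * n"
    using sum_mono[of U "\<lambda>v. 2 * out v + 2" "\<lambda>_. n"] \<open>\<forall>v\<in>U. 2 * out v + 2 \<le> n\<close> n_def by simp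
  finally have "n * (n - 1) + 2 * n \<le> n * n" using sum_out by simp
  moreover have "n * (n - 1) + n = n * n" using \<open>n > 0\<close> by (simp add: algebra_simps)
  ultimately show False using \<open>n > 0\<close> by linarith
qed

lemma tournament_on_common_out_nbrs:
  assumes "tournament_on U E" "finite U" "2 ^ j \<le> card U"
  shows "\<exists>P U'. P \<subseteq> U \<and> U' \<subseteq> U - P \<and> card P = j \<and> (\<forall>p\<in>P. \<forall>w\<in>U'. (p, w) \<in> E) \<and>
           card U + 1 \<le> 2 ^ j * (card U' + 1)"
  using assms
proof (induction j arbitrary: U)
  case 0
  show ?case by (intro exI[of _ "{}"] exI[of _ U]) simp
next
  case (Suc j)
  have "U \<noteq> {}" using Suc.prems(3) by auto
  then obtain v where v: "v \<in> U" "card U \<le> 2 * card {w \<in> U. (v, w) \<in> E} + 1"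
    using tournament_on_exists_large_out_degree[OF Suc.prems(1,2)] by blast
  define Out where "Out = {w \<in> U. (v, w) \<in> E}"
  have "v \<notin> Out" using Suc.prems(1) v(1) unfolding Out_def tournament_on_def by blast
  have "tournament_on Out E" using Suc.prems(1) by (rule tournament_on_subset) (auto simp: Out_def)
  have "finite Out" using Suc.prems(2) by (simp add: Out_def)
  have "2 * 2 ^ j \<le> 2 * card Out + 1" using Suc.prems(3) v(2) by (simp add: Out_def)
  then have "2 ^ j \<le> card Out" by presburger
  then obtain P U' where P: "P \<subseteq> Out" "U' \<subseteq> Out - P" "card P = j"
      "\<forall>p\<in>P. \<forall>w\<in>U'. (p, w) \<in> E" "card Out + 1 \<le> 2 ^ j * (card U' + 1)"
    using Suc.IH[OF \<open>tournament_on Out E\<close> \<open>finite Out\<close>] by blast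
  have "finite P" using P(1) \<open>finite Out\<close> finite_subset by blast
  have "v \<notin> P" using P(1) \<open>v \<notin> Out\<close> by blast
  show ?case
  proof (intro exI conjI)
    show "insert v P \<subseteq> U" "U' \<subseteq> U - insert v P"
      using P(1,2) v(1) \<open>v \<notin> Out\<close> by (auto simp: Out_def)
    show "card (insert v P) = Suc j"
      using P(3) \<open>finite P\<close> \<open>v \<notin> P\<close> by simp
    show "\<forall>p\<in>insert v P. \<forall>w\<in>U'. (p, w) \<in> E"
      using P(2,4) by (auto simp: Out_def)
    have "card U + 1 \<le> 2 * (card Out + 1)" using v(2) by (simp add: Out_def)
    also have "\<dots> \<le> 2 * (2 ^ j * (card U' + 1))" using P(5) by simp
    finally show "card U + 1 \<le> 2 ^ Suc j * (card U' + 1)" by simp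
  qed
qed

lemma tournament_on_blocks:
  assumes "tournament_on V A" "finite V" "0 < k" "(2 * k - 1) * 2 ^ (2 * k) \<le> card V"
  obtains P N R where "P \<subseteq> V" "N \<subseteq> V" "R \<subseteq> V" "P \<inter> N = {}" "(P \<union> N) \<inter> R = {}"
    "card P = k" "card N = k" "2 * k - 1 \<le> card R"
    "\<forall>p\<in>P. \<forall>r\<in>R. (p, r) \<in> A" "\<forall>p\<in>P. \<forall>m\<in>N. (p, m) \<in> A" "\<forall>r\<in>R. \<forall>m\<in>N. (r, m) \<in> A"
proof -
  define q where "q = (2::nat) ^ k"
  have "0 < q" "1 \<le> 2 * k - 1" using \<open>0 < k\<close> by (simp_all add: q_def)
  have size: "(2 * k - 1) * (q * q) \<le> card V"
    using assms(4) by (simp add: q_def mult_2 power_add)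
  have "q \<le> q * q" using \<open>0 < q\<close> by simp
  also have "\<dots> \<le> (2 * k - 1) * (q * q)" using \<open>1 \<le> 2 * k - 1\<close> by simp
  finally have "2 ^ k \<le> card V" using size unfolding q_def by linarith
  then obtain P U where P: "P \<subseteq> V" "U \<subseteq> V - P" "card P = k" "\<forall>p\<in>P. \<forall>w\<in>U. (p, w) \<in> A"
      "card V + 1 \<le> q * (card U + 1)"
    using tournament_on_common_out_nbrs[OF assms(1,2) \<open>2 ^ k \<le> card V\<close>] unfolding q_def by metis
  have "finite U" using P(2) assms(2) finite_subset by blast
  have "q * ((2 * k - 1) * q) = (2 * k - 1) * (q * q)" by (simp only: ac_simps)
  also have "\<dots> < q * (card U + 1)" using size P(5) by linarith
  finally have "(2 * k - 1) * q < card U + 1" using mult_less_cancel1 by blast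
  moreover have "q \<le> (2 * k - 1) * q" using \<open>1 \<le> 2 * k - 1\<close> by simp
  ultimately have "2 ^ k \<le> card U" unfolding q_def by linarith
  moreover have "tournament_on U (A\<inverse>)"
    using assms(1) P(2) by (blast intro: tournament_on_converse tournament_on_subset)
  ultimately obtain N R where N: "N \<subseteq> U" "R \<subseteq> U - N" "card N = k"
      "\<forall>m\<in>N. \<forall>r\<in>R. (m, r) \<in> A\<inverse>" "card U + 1 \<le> q * (card R + 1)"
    using tournament_on_common_out_nbrs[OF _ \<open>finite U\<close>] unfolding q_def by metis
  have "(q * q) * (2 * k - 1) < card V + 1" using size by (simp only: ac_simps)
  also have "\<dots> \<le> q * (card U + 1)" by (rule P(5))
  also have "\<dots> \<le> q * (q * (card R + 1))" using N(5) by (rule mult_le_mono2)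
  also have "\<dots> = (q * q) * (card R + 1)" by (simp only: ac_simps)
  finally have "2 * k - 1 \<le> card R" using mult_less_cancel1 by (metis less_Suc_eq_le Suc_eq_plus1)
  show thesis
  proof (rule that)
    show "P \<subseteq> V" "N \<subseteq> V" "R \<subseteq> V" "P \<inter> N = {}" "(P \<union> N) \<inter> R = {}"
      using P(1,2) N(1,2) by auto
    show "\<forall>p\<in>P. \<forall>r\<in>R. (p, r) \<in> A" "\<forall>p\<in>P. \<forall>m\<in>N. (p, m) \<in> A" "\<forall>r\<in>R. \<forall>m\<in>N. (r, m) \<in> A"
      using P(4) N(1,2,4) by blast+
  qed (use P(3) N(3) \<open>2 * k - 1 \<le> card R\<close> in auto)
qed

lemma strongly_connected_restrict:
  "strongly_connected C (Restr E C) \<longleftrightarrow> strongly_connected C E"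
  unfolding strongly_connected_def by (simp add: Int_assoc)

lemma strongly_connected_exit:
  assumes "strongly_connected C E" "x \<in> C \<inter> D" "y \<in> C - D"
  obtains u w where "(u, w) \<in> E" "u \<in> C \<inter> D" "w \<in> C - D"
proof -
  have "(x, y) \<in> (Restr E C)\<^sup>*"
    using assms unfolding strongly_connected_def by blast
  then have "\<exists>u w. (u, w) \<in> E \<and> u \<in> C \<inter> D \<and> w \<in> C - D"
    using assms(2,3) by (induction rule: rtrancl_induct) auto
  then show thesis using that by blast
qed

lemma strongly_connected_by_core:
  assumes "strongly_connected Z E" "Z \<subseteq> C"
    and to_core: "\<And>x. x \<in> C \<Longrightarrow> \<exists>z\<in>Z. (x, z) \<in> (Restr E C)\<^sup>*"
    and from_core: "\<And>x. x \<in> C \<Longrightarrow> \<exists>z\<in>Z. (z, x) \<in> (Restr E C)\<^sup>*"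
  shows "strongly_connected C E"
proof -
  have "(Restr E Z)\<^sup>* \<subseteq> (Restr E C)\<^sup>*"
    using \<open>Z \<subseteq> C\<close> by (intro rtrancl_mono) auto
  then have "\<forall>z\<in>Z. \<forall>z'\<in>Z. (z, z') \<in> (Restr E C)\<^sup>*"
    using assms(1) unfolding strongly_connected_def by blast
  then show ?thesis
    unfolding strongly_connected_def using to_core from_core by (meson rtrancl_trans)
qed

lemma strongly_connected_block_cycle:
  assumes "\<forall>p\<in>P. \<forall>r\<in>R. (p, r) \<in> E" "\<forall>r\<in>R. \<forall>m\<in>N. (r, m) \<in> E" "\<forall>m\<in>N. \<forall>p\<in>P. (m, p) \<in> E"
    and "finite S" "card S < card P" "card S < card R" "card S < card N"
  shows "strongly_connected (P \<union> R \<union> N - S) E"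
proof -
  define C where "C = P \<union> R \<union> N - S"
  obtain p r m where prm: "p \<in> P - S" "r \<in> R - S" "m \<in> N - S"
    using exists_notin_of_card_less[OF \<open>finite S\<close>] assms(5-7) by (meson DiffI)
  have triangle: "\<forall>z\<in>{p, r, m}. \<forall>z'\<in>{p, r, m}. (z, z') \<in> F\<^sup>*"
    if "(p, r) \<in> F" "(r, m) \<in> F" "(m, p) \<in> F" for F
    using that by (auto intro: rtrancl_into_rtrancl)
  have "(p, r) \<in> Restr E {p, r, m}" "(r, m) \<in> Restr E {p, r, m}" "(m, p) \<in> Restr E {p, r, m}"
    using assms(1-3) prm by auto
  then have core: "strongly_connected {p, r, m} E"
    unfolding strongly_connected_def by (rule triangle)
  have "{p, r, m} \<subseteq> C" using prm unfolding C_def by blast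
  have link: "(\<exists>z\<in>{p, r, m}. (x, z) \<in> (Restr E C)\<^sup>*) \<and> (\<exists>z\<in>{p, r, m}. (z, x) \<in> (Restr E C)\<^sup>*)"
    if "x \<in> C" for x
  proof -
    have "p \<in> C" "r \<in> C" "m \<in> C" using prm unfolding C_def by auto
    consider "x \<in> P" | "x \<in> R" | "x \<in> N" using \<open>x \<in> C\<close> unfolding C_def by blast
    then show ?thesis
    proof cases
      case 1
      then have "(x, r) \<in> Restr E C" "(m, x) \<in> Restr E C"
        using assms(1,3) prm \<open>x \<in> C\<close> \<open>r \<in> C\<close> \<open>m \<in> C\<close> by auto
      then show ?thesis by blast
    next
      case 2
      then have "(x, m) \<in> Restr E C" "(p, x) \<in> Restr E C"
        using assms(1,2) prm \<open>x \<in> C\<close> \<open>p \<in> C\<close> \<open>m \<in> C\<close> by auto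
      then show ?thesis by blast
    next
      case 3
      then have "(x, p) \<in> Restr E C" "(r, x) \<in> Restr E C"
        using assms(2,3) prm \<open>x \<in> C\<close> \<open>p \<in> C\<close> \<open>r \<in> C\<close> by auto
      then show ?thesis by blast
    qed
  qed
  show ?thesis
    unfolding C_def[symmetric]
    by (rule strongly_connected_by_core[OF core \<open>{p, r, m} \<subseteq> C\<close>]) (use link in blast)+
qed

lemma k_strong_by_core:
  assumes "finite V" "k + 1 \<le> card V" "W \<subseteq> V"
    and core: "\<And>S. S \<subseteq> V \<Longrightarrow> card S < k \<Longrightarrow> strongly_connected (W - S) E"
    and degrees: "\<And>x. x \<in> V - W \<Longrightarrow> k \<le> card {w \<in> W. (x, w) \<in> E} \<and> k \<le> card {w \<in> W. (w, x) \<in> E}"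
  shows "k_strong k V E"
  unfolding k_strong_def
proof (intro conjI allI impI)
  fix S assume S: "S \<subseteq> V \<and> card S < k"
  then have "finite S" using assms(1) finite_subset by blast
  have links: "(\<exists>w \<in> W - S. (x, w) \<in> (Restr E (V - S))\<^sup>*) \<and> (\<exists>w \<in> W - S. (w, x) \<in> (Restr E (V - S))\<^sup>*)"
    if x: "x \<in> V - S" for x
  proof (cases "x \<in> W")
    case True
    then show ?thesis using x by blast
  next
    case False
    then have "card S < card {w \<in> W. (x, w) \<in> E}" "card S < card {w \<in> W. (w, x) \<in> E}"
      using degrees[of x] x S by auto
    then obtain w w' where "w \<in> W - S" "(x, w) \<in> E" "w' \<in> W - S" "(w', x) \<in> E"
      using exists_notin_of_card_less[OF \<open>finite S\<close>] by (metis (no_types, lifting) DiffI mem_Collect_eq)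
    then show ?thesis using x \<open>W \<subseteq> V\<close> by blast
  qed
  have "strongly_connected (W - S) E" using core S by blast
  then have "strongly_connected (V - S) E"
    by (rule strongly_connected_by_core) (use \<open>W \<subseteq> V\<close> links in blast)+
  then show "strongly_connected (V - S) (Restr E (V - S))"
    by (simp add: strongly_connected_restrict)
qed (rule assms(2))

lemma card_separator_le:
  assumes "finite F" "V1 \<subseteq> fst ` F"
  shows "card ((V1 - {x}) \<union> snd ` {e \<in> F. fst e = x}) \<le> card F"
proof -
  define Fx where "Fx = {e \<in> F. fst e = x}"
  have "finite Fx" "Fx \<subseteq> F" using assms(1) by (simp_all add: Fx_def)
  have "V1 - {x} \<subseteq> fst ` (F - Fx)" using assms(2) unfolding Fx_def by auto
  then have "card (V1 - {x}) \<le> card (fst ` (F - Fx))"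
    using assms(1) by (intro card_mono) simp_all
  also have "\<dots> \<le> card (F - Fx)"
    using assms(1) by (intro card_image_le) simp
  moreover have "card (snd ` Fx) \<le> card Fx" using \<open>finite Fx\<close> by (rule card_image_le)
  moreover have "card F = card (F - Fx) + card Fx"
    using \<open>finite Fx\<close> \<open>Fx \<subseteq> F\<close> card_mono[OF assms(1) \<open>Fx \<subseteq> F\<close>] by (simp add: card_Diff_subset)
  ultimately show ?thesis
    unfolding Fx_def[symmetric] using card_Un_le[of "V1 - {x}" "snd ` Fx"] by linarith
qed

lemma k_strong_exit:
  assumes "k_strong k V E" "S \<subseteq> V" "card S < k" "D \<subseteq> V" "x \<in> D - S" "y \<in> V - S - D"
  obtains u w where "(u, w) \<in> E" "u \<in> D - S" "w \<in> V - S - D"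
proof -
  have "strongly_connected (V - S) E"
    using assms(1-3) unfolding k_strong_def by (simp add: strongly_connected_restrict)
  moreover have "x \<in> (V - S) \<inter> D" "y \<in> V - S - D" using assms(4-6) by auto
  ultimately obtain u w where "(u, w) \<in> E" "u \<in> (V - S) \<inter> D" "w \<in> V - S - D"
    by (rule strongly_connected_exit)
  then show thesis using that by blast
qed

lemma k_strong_out_nbr_avoiding:
  assumes "k_strong k V E" "S \<subseteq> V" "card S < k" "x \<in> V - S"
  obtains w where "(x, w) \<in> E" "w \<in> V - S - {x}"
proof -
  have "k + 1 \<le> card V" using assms(1) unfolding k_strong_def by blast
  then have "finite V" using card.infinite by fastforce
  have "card (V - S) = card V - card S"
    using \<open>S \<subseteq> V\<close> \<open>finite V\<close> by (simp add: card_Diff_subset finite_subset)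
  then have "card (V - S - {x}) = card V - card S - 1" using assms(4) by simp
  then have "0 < card (V - S - {x})" using \<open>card S < k\<close> \<open>k + 1 \<le> card V\<close> by linarith
  then obtain z where "z \<in> V - S - {x}" by (auto simp: card_gt_0_iff)
  moreover have "{x} \<subseteq> V" "x \<in> {x} - S" using assms(4) by auto
  ultimately obtain u w where "(u, w) \<in> E" "u \<in> {x} - S" "w \<in> V - S - {x}"
    using k_strong_exit[OF assms(1-3)] by blast
  then show thesis using that by blast
qed

(* If some vertex of V1 is the tail of no cut arc, deleting the tails of the cut arcs leaves no
   arc out of V1; otherwise deleting the rest of V1 and the heads of the cut arcs leaving one
   x in V1 leaves no arc out of x.  Either deletion has fewer than k vertices. *)
lemma k_strong_imp_k_arc_strong:
  assumes "k_strong k V E"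
  shows "k_arc_strong k V E"
  unfolding k_arc_strong_def
proof (intro allI impI)
  fix V1 assume V1: "V1 \<subseteq> V \<and> V1 \<noteq> {} \<and> V1 \<noteq> V"
  define F where "F = {(u, v) \<in> E. u \<in> V1 \<and> v \<in> V - V1}"
  have "k + 1 \<le> card V" using assms unfolding k_strong_def by blast
  then have "finite V" using card.infinite by fastforce
  have "F \<subseteq> V \<times> V" using V1 unfolding F_def by auto
  then have "finite F" using \<open>finite V\<close> by (simp add: finite_subset)
  show "k \<le> card F"
  proof (rule ccontr)
    assume "\<not> k \<le> card F"
    show False
    proof (cases "V1 \<subseteq> fst ` F")
      case False
      then obtain x where "x \<in> V1 - fst ` F" by blast
      obtain y where "y \<in> V - V1" using V1 by blast
      then have "y \<in> V - fst ` F - V1" by (auto simp: F_def)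
      have "card (fst ` F) < k"
        using card_image_le[OF \<open>finite F\<close>, of fst] \<open>\<not> k \<le> card F\<close> by linarith
      have "fst ` F \<subseteq> V" using V1 by (auto simp: F_def)
      obtain u w where "(u, w) \<in> E" "u \<in> V1 - fst ` F" "w \<in> V - fst ` F - V1"
        by (rule k_strong_exit[OF assms \<open>fst ` F \<subseteq> V\<close> \<open>card (fst ` F) < k\<close> _
              \<open>x \<in> V1 - fst ` F\<close> \<open>y \<in> V - fst ` F - V1\<close>]) (use V1 in blast)
      then have "(u, w) \<in> F" "u \<notin> fst ` F" unfolding F_def by auto
      then show False using image_eqI[of u fst "(u, w)" F] by simp
    next
      case True
      obtain x where "x \<in> V1" using V1 by blast
      define S where "S = (V1 - {x}) \<union> snd ` {e \<in> F. fst e = x}"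
      have "card S < k"
        using card_separator_le[OF \<open>finite F\<close> True, of x] \<open>\<not> k \<le> card F\<close> unfolding S_def by linarith
      have "snd ` F \<subseteq> V - V1" unfolding F_def by auto
      then have "S \<subseteq> V" "x \<in> V - S" using V1 \<open>x \<in> V1\<close> unfolding S_def by auto
      then obtain w where "(x, w) \<in> E" "w \<in> V - S - {x}"
        using k_strong_out_nbr_avoiding[OF assms _ \<open>card S < k\<close>] by blast
      then have "w \<notin> V1" "w \<notin> S" unfolding S_def by blast+
      then have "(x, w) \<in> {e \<in> F. fst e = x}"
        using \<open>(x, w) \<in> E\<close> \<open>x \<in> V1\<close> \<open>w \<in> V - S - {x}\<close> unfolding F_def by simp
      then show False using \<open>w \<notin> S\<close> unfolding S_def using rev_image_eqI[of "(x, w)" _ w snd] by simp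
    qed
  qed
qed

lemma tournament_on_reversal_balances:
  assumes "tournament_on V A" "finite Q" "finite R" "Q \<union> R \<subseteq> V" "Q \<inter> R = {}" "x \<in> V - (Q \<union> R)"
    and "2 * k \<le> card Q" "2 * k - 1 \<le> card R"
    and "\<not> (k \<le> card {w \<in> Q \<union> R. (x, w) \<in> A} \<and> k \<le> card {w \<in> Q \<union> R. (w, x) \<in> A})"
  shows "k \<le> card {w \<in> Q. (w, x) \<in> A} + card {w \<in> R. (x, w) \<in> A} \<and>
         k \<le> card {w \<in> Q. (x, w) \<in> A} + card {w \<in> R. (w, x) \<in> A}"
proof -
  have "x \<notin> Q" "x \<notin> R" using assms(6) by auto
  have "card {w \<in> Q. (x, w) \<in> A} + card {w \<in> Q. (w, x) \<in> A} = card Q"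
    using tournament_on_card_out_plus_in[OF assms(1) _ assms(2), of x] assms(4,6) \<open>x \<notin> Q\<close> by simp
  moreover have "card {w \<in> R. (x, w) \<in> A} + card {w \<in> R. (w, x) \<in> A} = card R"
    using tournament_on_card_out_plus_in[OF assms(1) _ assms(3), of x] assms(4,6) \<open>x \<notin> R\<close> by simp
  moreover note card_filter_Un_disjoint[OF assms(2,3,5)]
  ultimately show ?thesis using assms(7-9) by (simp only:) linarith
qed

lemma in_invert_iff:
  "(a, b) \<in> invert X A \<longleftrightarrow> (if a \<in> X \<and> b \<in> X then (b, a) \<in> A else (a, b) \<in> A)"
  unfolding invert_def by auto

lemma tournament_on_invert_balances:
  assumes "tournament_on V A" "finite Q" "finite R" "Q \<union> R \<subseteq> V" "Q \<inter> R = {}"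
    and "2 * k \<le> card Q" "2 * k - 1 \<le> card R" "x \<in> V - (Q \<union> R)"
  defines "X \<equiv> Q \<union> {y \<in> V - (Q \<union> R).
      \<not> (k \<le> card {w \<in> Q \<union> R. (y, w) \<in> A} \<and> k \<le> card {w \<in> Q \<union> R. (w, y) \<in> A})}"
  shows "k \<le> card {w \<in> Q \<union> R. (x, w) \<in> invert X A} \<and> k \<le> card {w \<in> Q \<union> R. (w, x) \<in> invert X A}"
proof (cases "x \<in> X")
  case False
  then have "(x, w) \<in> invert X A \<longleftrightarrow> (x, w) \<in> A" "(w, x) \<in> invert X A \<longleftrightarrow> (w, x) \<in> A" for w
    by (simp_all add: in_invert_iff)
  moreover have "k \<le> card {w \<in> Q \<union> R. (x, w) \<in> A} \<and> k \<le> card {w \<in> Q \<union> R. (w, x) \<in> A}"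
    using False assms(8) unfolding X_def by blast
  ultimately show ?thesis by simp
next
  case True
  have "R \<inter> X = {}" using assms(5) unfolding X_def by blast
  then have "{w \<in> Q \<union> R. (x, w) \<in> invert X A} = {w \<in> Q. (w, x) \<in> A} \<union> {w \<in> R. (x, w) \<in> A}"
    "{w \<in> Q \<union> R. (w, x) \<in> invert X A} = {w \<in> Q. (x, w) \<in> A} \<union> {w \<in> R. (w, x) \<in> A}"
    using True unfolding X_def by (auto simp: in_invert_iff)
  moreover have "k \<le> card {w \<in> Q. (w, x) \<in> A} + card {w \<in> R. (x, w) \<in> A} \<and>
      k \<le> card {w \<in> Q. (x, w) \<in> A} + card {w \<in> R. (w, x) \<in> A}"
    using tournament_on_reversal_balances[OF assms(1-5,8,6,7)] True assms(8) unfolding X_def by blast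
  ultimately show ?thesis
    using assms(2,3,5) by (simp add: card_Un_disjoint disjoint_iff)
qed

lemma tournament_blocks_invert_k_strong:
  assumes "tournament V A" "0 < k"
    and "P \<subseteq> V" "N \<subseteq> V" "R \<subseteq> V" "P \<inter> N = {}" "(P \<union> N) \<inter> R = {}"
    and "k \<le> card P" "k \<le> card N" "2 * k - 1 \<le> card R"
    and PR: "\<forall>p\<in>P. \<forall>r\<in>R. (p, r) \<in> A" and PN: "\<forall>p\<in>P. \<forall>m\<in>N. (p, m) \<in> A"
    and RN: "\<forall>r\<in>R. \<forall>m\<in>N. (r, m) \<in> A"
  shows "\<exists>X\<subseteq>V. k_strong k V (invert X A)"
proof -
  have "finite V" "tournament_on V A"
    using assms(1) tournament_imp_tournament_on unfolding tournament_def by blast+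
  define Q where "Q = P \<union> N"
  define X where "X = Q \<union> {y \<in> V - (Q \<union> R).
      \<not> (k \<le> card {w \<in> Q \<union> R. (y, w) \<in> A} \<and> k \<le> card {w \<in> Q \<union> R. (w, y) \<in> A})}"
  have "finite Q" "finite R" "Q \<union> R \<subseteq> V" "X \<subseteq> V" "Q \<inter> R = {}" "R \<inter> X = {}"
    using assms(3-7) \<open>finite V\<close> finite_subset unfolding Q_def X_def by blast+
  have "card Q = card P + card N"
    using \<open>finite Q\<close> assms(6) unfolding Q_def by (simp add: card_Un_disjoint)
  then have "2 * k \<le> card Q" using assms(8,9) by linarith
  have "k_strong k V (invert X A)"
  proof (rule k_strong_by_core[OF \<open>finite V\<close> _ \<open>Q \<union> R \<subseteq> V\<close>])
    show "k + 1 \<le> card V"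
      using card_mono[OF \<open>finite V\<close>, of Q] \<open>Q \<union> R \<subseteq> V\<close> \<open>2 * k \<le> card Q\<close> \<open>0 < k\<close> by auto
  next
    fix S assume "S \<subseteq> V" "card S < k"
    have "\<forall>p\<in>P. \<forall>r\<in>R. (p, r) \<in> invert X A" "\<forall>r\<in>R. \<forall>m\<in>N. (r, m) \<in> invert X A"
      "\<forall>m\<in>N. \<forall>p\<in>P. (m, p) \<in> invert X A"
      using PR RN PN \<open>R \<inter> X = {}\<close> by (auto simp: in_invert_iff X_def Q_def)
    moreover have "finite S" using \<open>S \<subseteq> V\<close> \<open>finite V\<close> finite_subset by blast
    moreover have "card S < card P" "card S < card R" "card S < card N"
      using \<open>card S < k\<close> assms(8-10) by linarith+
    ultimately have "strongly_connected (P \<union> R \<union> N - S) (invert X A)"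
      by (rule strongly_connected_block_cycle)
    moreover have "P \<union> R \<union> N = Q \<union> R" unfolding Q_def by blast
    ultimately show "strongly_connected (Q \<union> R - S) (invert X A)" by simp
  next
    fix x assume "x \<in> V - (Q \<union> R)"
    then show "k \<le> card {w \<in> Q \<union> R. (x, w) \<in> invert X A} \<and> k \<le> card {w \<in> Q \<union> R. (w, x) \<in> invert X A}"
      unfolding X_def
      by (rule tournament_on_invert_balances[OF \<open>tournament_on V A\<close> \<open>finite Q\<close> \<open>finite R\<close>
          \<open>Q \<union> R \<subseteq> V\<close> \<open>Q \<inter> R = {}\<close> \<open>2 * k \<le> card Q\<close> assms(10)])
  qed
  then show ?thesis using \<open>X \<subseteq> V\<close> by blast
qed

theorem theorem6p1:
  fixes k n :: nat and V :: "'a set" and A :: "('a \<times> 'a) set"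
  assumes "k > 0" and "tournament V A" and "card V = n"
    and "n \<ge> (2 * k - 1) * 2 ^ (2 * k)"
  shows "sinv_arc k V A \<le> sinv k V A \<and> sinv k V A \<le> 1"
proof
  show "sinv_arc k V A \<le> sinv k V A"
    unfolding sinv_arc_def sinv_def
    by (rule INF_superset_mono) (auto intro: k_strong_imp_k_arc_strong)
next
  have "tournament_on V A" "finite V"
    using assms(2) tournament_imp_tournament_on unfolding tournament_def by blast+
  moreover have "(2 * k - 1) * 2 ^ (2 * k) \<le> card V" using assms(3,4) by simp
  ultimately obtain P N R where blocks: "P \<subseteq> V" "N \<subseteq> V" "R \<subseteq> V" "P \<inter> N = {}" "(P \<union> N) \<inter> R = {}"
      "card P = k" "card N = k" "2 * k - 1 \<le> card R"
      "\<forall>p\<in>P. \<forall>r\<in>R. (p, r) \<in> A" "\<forall>p\<in>P. \<forall>m\<in>N. (p, m) \<in> A" "\<forall>r\<in>R. \<forall>m\<in>N. (r, m) \<in> A"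
    using tournament_on_blocks[OF _ _ assms(1)] by blast
  obtain X where "X \<subseteq> V" "k_strong k V (invert X A)"
    using tournament_blocks_invert_k_strong[OF assms(2,1) blocks(1-5) blocks(6,7)[symmetric, THEN eq_refl]
        blocks(8-11)] by blast
  then have "sinv k V A \<le> enat (length [X])"
    unfolding sinv_def by (intro INF_lower) (simp add: invert_seq_def)
  then show "sinv k V A \<le> 1" by (simp add: one_enat_def)
qed

end
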